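(* Let $\boldsymbol{B}\in\mathbb{R}^{d\times d}$ be a fixed positive definite matrix with eigenvalues $\beta_1,\dots,\beta_d\ge0$, and let $c$ be a positive constant with $c\le\operatorname{tr}(\boldsymbol{B})$. Over positive definite matrices $\boldsymbol{G}\in\mathbb{R}^{d\times d}$ with $\operatorname{tr}(\boldsymbol{G})=c$, the minimum of $\operatorname{tr}(\boldsymbol{G}^{-1}\boldsymbol{B})+\ln\det(\boldsymbol{G})$ is achieved at $\boldsymbol{G}=\boldsymbol{O}^\top\operatorname{Diag}(\alpha_1^*,\dots,\alpha_d^* )\boldsymbol{O}$, where $\boldsymbol{O}$ is any orthogonal matrix with $\boldsymbol{B}=\boldsymbol{O}^\top\operatorname{Diag}(\beta_1,\dots,\beta_d)\boldsymbol{O}$, $$\alpha_i^*=\frac{\sqrt{1-4\lambda^*\beta_i}-1}{-2\lambda^*},$$ and $\lambda^*\le0$ is the unique solution of $\sum_{i=1}^d\frac{2\beta_i}{1+\sqrt{1-4\lambda^*\beta_i}}=c$. *)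

theory Defs
  imports "HOL-Analysis.Analysis"
begin

definition pos_def_matrix :: "real^'n^'n \<Rightarrow> bool" where
  "pos_def_matrix A \<longleftrightarrow> transpose A = A \<and> (\<forall>x. x \<noteq> 0 \<longrightarrow> x \<bullet> (A *v x) > 0)"

definition diag_matrix :: "real^'n \<Rightarrow> real^'n^'n" where
  "diag_matrix v = (\<chi> i j. if i = j then v $ i else 0)"

definition obj :: "real^'n^'n \<Rightarrow> real^'n^'n \<Rightarrow> real" where
  "obj B G = trace (matrix_inv G ** B) + ln (det G)"

text \<open>alpha_i^* = (sqrt(1 - 4 l b) - 1) / (-2 l); at l = 0 the (removable)
  singularity is filled by its limit value b.\<close>
definition alpha_star :: "real \<Rightarrow> real \<Rightarrow> real" where
  "alpha_star l b = (if l = 0 then b else (sqrt (1 - 4 * l * b) - 1) / (-2 * l))"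

end

(*
  Conjugating by O reduces the problem to B = Diag beta. For a positive definite G
  (already conjugated) let H = G^-1. Hadamard's inequality det H <= prod_i H_ii gives
  ln det G >= - sum_i ln H_ii, and positive definiteness gives G_ii H_ii >= 1, so with
  a_i = 1 / H_ii

    tr(G^-1 B) + ln det G >= sum_i (beta_i / a_i + ln a_i),   sum_i a_i <= tr G = c.

  The scalar function a -> beta_i / a + ln a - lambda a is minimised at its stationary
  point, the positive root alpha_i of a - lambda a^2 = beta_i, and since lambda <= 0
  the relaxed budget sum_i a_i <= c = sum_i alpha_i cannot beat this Lagrangian bound,
  which Diag alpha attains. The multiplier exists and is unique because
  lambda -> sum_i alpha_i is continuous and strictly increasing on lambda <= 0, tends
  to 0 as lambda -> -infinity and equals tr B at lambda = 0.

  Hadamard's inequality is proved by symmetric Gaussian elimination, which preserves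
  positive definiteness and the determinant and does not increase diagonal entries.
*)
theory Submission
  imports Defs
begin

lemma matrix_inv_eqI:
  fixes A X :: "'a::field^'n^'n"
  assumes "A ** X = mat 1"
  shows "matrix_inv A = X"
proof -
  let ?P = "\<lambda>Y. A ** Y = mat 1 \<and> Y ** A = mat 1"
  have "?P X" using assms matrix_left_right_inverse by blast
  then have "?P (matrix_inv A)" unfolding matrix_inv_def by (rule someI)
  then show ?thesis by (metis assms matrix_mul_assoc matrix_mul_lid matrix_mul_rid)
qed

lemma matrix_inv_right:
  fixes A :: "'a::field^'n^'n"
  assumes "invertible A"
  shows "A ** matrix_inv A = mat 1"
  using assms matrix_inv_eqI unfolding invertible_right_inverse by metis

lemma orthogonal_matrix_invertible:
  fixes Q :: "real^'n^'n"
  assumes "orthogonal_matrix Q"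
  shows "invertible Q"
  using assms unfolding orthogonal_matrix_def invertible_def by blast

lemma orthogonal_conj_cancel:
  fixes Q X :: "real^'n^'n"
  assumes "orthogonal_matrix Q"
  shows "Q ** (transpose Q ** X ** Q) ** transpose Q = X"
proof -
  have "Q ** transpose Q = mat 1" using assms orthogonal_matrix_def by blast
  then show ?thesis by (metis matrix_mul_assoc matrix_mul_lid matrix_mul_rid)
qed

lemma trace_orthogonal_conj:
  fixes Q X :: "real^'n^'n"
  assumes "orthogonal_matrix Q"
  shows "trace (transpose Q ** X ** Q) = trace X"
  using assms unfolding orthogonal_matrix_def
  by (metis matrix_mul_assoc matrix_mul_lid trace_mul_sym)

lemma det_orthogonal_conj:
  fixes Q X :: "real^'n^'n"
  assumes "orthogonal_matrix Q"
  shows "det (transpose Q ** X ** Q) = det X"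
  using det_orthogonal_matrix[OF assms] by (auto simp: det_mul)

lemma matrix_inv_orthogonal_conj:
  fixes Q X :: "real^'n^'n"
  assumes "orthogonal_matrix Q" and "invertible X"
  shows "matrix_inv (transpose Q ** X ** Q) = transpose Q ** matrix_inv X ** Q"
proof (rule matrix_inv_eqI)
  have QQt: "Y ** Q ** transpose Q = Y" for Y :: "real^'n^'n"
    using assms(1) unfolding orthogonal_matrix_def by (metis matrix_mul_assoc matrix_mul_rid)
  have XXi: "Y ** X ** matrix_inv X = Y" for Y :: "real^'n^'n"
    using matrix_inv_right[OF assms(2)] by (metis matrix_mul_assoc matrix_mul_rid)
  show "transpose Q ** X ** Q ** (transpose Q ** matrix_inv X ** Q) = mat 1"
    using assms(1) by (simp add: matrix_mul_assoc QQt XXi orthogonal_matrix)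
qed

lemma diag_matrix_nth [simp]: "diag_matrix a $ i $ j = (if i = j then a $ i else 0)"
  by (simp add: diag_matrix_def)

lemma diag_matrix_mult: "diag_matrix a ** diag_matrix b = diag_matrix (\<chi> i. a $ i * b $ i)"
proof -
  have "(\<Sum>k\<in>UNIV. (if i = k then a $ i else 0) * (if k = j then b $ k else 0))
      = (if i = j then a $ i * b $ i else 0)" for i j
  proof -
    have "(\<lambda>k. (if i = k then a $ i else 0) * (if k = j then b $ k else 0))
       = (\<lambda>k. if k = i then (if i = j then a $ i * b $ i else 0) else 0)" by auto
    then show ?thesis by (simp only: sum.delta finite UNIV_I if_True)
  qed
  then show ?thesis by (simp add: matrix_matrix_mult_def vec_eq_iff)
qed

lemma trace_diag_matrix: "trace (diag_matrix a) = (\<Sum>i\<in>UNIV. a $ i)"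
  by (simp add: trace_def)

lemma det_diag_matrix: "det (diag_matrix (a :: real^'n)) = (\<Prod>i\<in>UNIV. a $ i)"
  by (subst det_diagonal) auto

lemma trace_mult_diag_matrix:
  fixes H :: "real^'n^'n"
  shows "trace (H ** diag_matrix b) = (\<Sum>i\<in>UNIV. H $ i $ i * b $ i)"
proof -
  have "(\<Sum>k\<in>UNIV. H $ i $ k * (if k = i then b $ k else 0)) = H $ i $ i * b $ i" for i
    by (simp add: if_distrib cong: if_cong)
  then show ?thesis by (simp add: trace_def matrix_matrix_mult_def)
qed

lemma matrix_inv_diag_matrix:
  fixes a :: "real^'n"
  assumes "\<And>i. a $ i \<noteq> 0"
  shows "matrix_inv (diag_matrix a) = diag_matrix (\<chi> i. inverse (a $ i))"
  by (rule matrix_inv_eqI) (simp add: diag_matrix_mult assms mat_def vec_eq_iff)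

section \<open>Positive definite matrices\<close>

lemma pos_def_matrix_symmetric:
  assumes "pos_def_matrix A"
  shows "transpose A = A"
  using assms unfolding pos_def_matrix_def by blast

lemma pos_def_matrix_nth_sym:
  assumes "pos_def_matrix A"
  shows "A $ i $ j = A $ j $ i"
  using pos_def_matrix_symmetric[OF assms] by (metis transpose_def vec_lambda_beta)

lemma pos_def_matrix_quadratic_nonneg:
  assumes "pos_def_matrix A"
  shows "0 \<le> x \<bullet> (A *v x)"
  using assms unfolding pos_def_matrix_def by (cases "x = 0") (auto intro: less_imp_le)

lemma pos_def_matrix_diag_pos:
  assumes "pos_def_matrix A"
  shows "0 < A $ i $ i"
proof -
  have "axis i 1 \<bullet> (A *v axis i 1) = A $ i $ i"
    by (simp add: matrix_vector_mult_basis inner_axis' column_def)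
  moreover have "axis i (1::real) \<noteq> 0" by simp
  ultimately show ?thesis using assms unfolding pos_def_matrix_def by metis
qed

lemma pos_def_matrix_congruence:
  fixes M P :: "real^'n^'n"
  assumes "pos_def_matrix M" and "invertible P"
  shows "pos_def_matrix (transpose P ** M ** P)"
  unfolding pos_def_matrix_def
proof (intro conjI allI impI)
  show "transpose (transpose P ** M ** P) = transpose P ** M ** P"
    using pos_def_matrix_symmetric[OF assms(1)] by (simp add: matrix_transpose_mul matrix_mul_assoc)
next
  fix x :: "real^'n"
  assume "x \<noteq> 0"
  then have "P *v x \<noteq> 0"
    using inj_matrix_vector_mult[OF assms(2)] by (metis injD matrix_vector_mult_0_right)
  then have "0 < (P *v x) \<bullet> (M *v (P *v x))" using assms(1) unfolding pos_def_matrix_def by blast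
  also have "(P *v x) \<bullet> (M *v (P *v x)) = x \<bullet> ((transpose P ** M ** P) *v x)"
    by (metis dot_lmul_matrix inner_commute matrix_vector_mul_assoc transpose_matrix_vector)
  finally show "0 < x \<bullet> ((transpose P ** M ** P) *v x)" .
qed

lemma pos_def_matrix_orthogonal_conj:
  fixes Q G :: "real^'n^'n"
  assumes "pos_def_matrix G" and "orthogonal_matrix Q"
  shows "pos_def_matrix (Q ** G ** transpose Q)"
  using pos_def_matrix_congruence[OF assms(1), of "transpose Q"] assms(2)
  by (simp add: orthogonal_matrix_invertible)

lemma pos_def_diag_matrix_iff:
  fixes a :: "real^'n"
  shows "pos_def_matrix (diag_matrix a) \<longleftrightarrow> (\<forall>i. 0 < a $ i)"
proof
  assume "pos_def_matrix (diag_matrix a)"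
  then show "\<forall>i. 0 < a $ i" using pos_def_matrix_diag_pos by fastforce
next
  assume pos: "\<forall>i. 0 < a $ i"
  show "pos_def_matrix (diag_matrix a)"
    unfolding pos_def_matrix_def
  proof (intro conjI allI impI)
    show "transpose (diag_matrix a) = diag_matrix a" by (simp add: transpose_def vec_eq_iff)
  next
    fix x :: "real^'n"
    assume "x \<noteq> 0"
    then obtain k where k: "x $ k \<noteq> 0" by (metis vec_eq_iff zero_index)
    have "x \<bullet> (diag_matrix a *v x) = (\<Sum>i\<in>UNIV. a $ i * (x $ i)\<^sup>2)"
      unfolding inner_vec_def matrix_vector_mult_def
      by (simp add: if_distrib if_distribR power2_eq_square mult_ac cong: if_cong)
    also have "\<dots> > 0"
    proof (rule sum_pos2)
      show "0 < a $ k * (x $ k)\<^sup>2" using pos k by simp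
    qed (use pos in \<open>auto intro!: mult_nonneg_nonneg simp: less_imp_le\<close>)
    finally show "0 < x \<bullet> (diag_matrix a *v x)" .
  qed
qed

lemma pos_def_matrix_invertible:
  fixes A :: "real^'n^'n"
  assumes "pos_def_matrix A"
  shows "invertible A"
  unfolding invertible_left_inverse matrix_left_invertible_ker
  using assms unfolding pos_def_matrix_def by fastforce

lemma pos_def_matrix_inv:
  fixes A :: "real^'n^'n"
  assumes A: "pos_def_matrix A"
  shows "pos_def_matrix (matrix_inv A)"
  unfolding pos_def_matrix_def
proof (intro conjI allI impI)
  have inv: "A ** matrix_inv A = mat 1"
    by (rule matrix_inv_right[OF pos_def_matrix_invertible[OF A]])
  then have "A ** transpose (matrix_inv A) = mat 1"
    using pos_def_matrix_symmetric[OF A] matrix_left_right_inverse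
    by (metis matrix_transpose_mul transpose_mat)
  then show "transpose (matrix_inv A) = matrix_inv A"
    using inv matrix_inv_eqI by metis
  fix x :: "real^'n"
  assume "x \<noteq> 0"
  then have "matrix_inv A *v x \<noteq> 0"
    using inv by (metis matrix_vector_mul_assoc matrix_vector_mul_lid matrix_vector_mult_0_right)
  then have "0 < (matrix_inv A *v x) \<bullet> (A *v (matrix_inv A *v x))"
    using A unfolding pos_def_matrix_def by blast
  then show "0 < x \<bullet> (matrix_inv A *v x)"
    by (simp add: matrix_vector_mul_assoc inv inner_commute)
qed

text \<open>With H the inverse of G, z = H e for the unit vector e at i and t = 1 / H i i, the
  nonnegativity of the quadratic form of G at e - t z reads G i i - 1 / H i i \<ge> 0.\<close>
lemma pos_def_matrix_diag_mult_inv_ge_1: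
  fixes G :: "real^'n^'n"
  assumes G: "pos_def_matrix G"
  shows "1 \<le> G $ i $ i * matrix_inv G $ i $ i"
proof -
  define H where "H = matrix_inv G"
  have GH: "G ** H = mat 1"
    unfolding H_def by (rule matrix_inv_right[OF pos_def_matrix_invertible[OF G]])
  have Hii: "0 < H $ i $ i" unfolding H_def by (rule pos_def_matrix_diag_pos[OF pos_def_matrix_inv[OF G]])
  define e :: "real^'n" where "e = axis i 1"
  define z where "z = H *v e"
  define t where "t = 1 / H $ i $ i"
  have Gz: "G *v z = e" by (simp add: z_def matrix_vector_mul_assoc GH)
  have ee: "e \<bullet> e = 1" by (simp add: e_def inner_axis)
  have eGe: "e \<bullet> (G *v e) = G $ i $ i"
    by (simp add: e_def matrix_vector_mult_basis inner_axis' column_def)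
  have zGe: "z \<bullet> (G *v e) = 1"
    using Gz ee by (metis dot_lmul_matrix pos_def_matrix_symmetric[OF G] transpose_matrix_vector)
  have ze: "z \<bullet> e = H $ i $ i"
    by (simp add: z_def e_def matrix_vector_mult_basis inner_axis column_def)
  have "0 \<le> (e - t *s z) \<bullet> (G *v (e - t *s z))" by (rule pos_def_matrix_quadratic_nonneg[OF G])
  also have "\<dots> = e \<bullet> (G *v e) - 2 * t * (z \<bullet> (G *v e)) + t * t * (z \<bullet> (G *v z))"
    using zGe Gz ee
    by (simp add: scalar_mult_eq_scaleR inner_commute algebra_simps)
  also have "\<dots> = G $ i $ i - 1 / H $ i $ i"
    using eGe zGe Gz ze Hii by (simp add: t_def inner_commute field_simps)
  finally show ?thesis using Hii by (simp add: H_def field_simps)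
qed

section \<open>Hadamard's inequality\<close>

definition shear_matrix :: "'a::ring_1^'n \<Rightarrow> 'n \<Rightarrow> 'a^'n^'n" where
  "shear_matrix u j = (\<chi> a b. (if a = b then 1 else 0) - (if b = j then u $ a else 0))"

lemma det_shear_matrix:
  fixes u :: "'a::field^'n"
  assumes "u $ j = 0"
  shows "det (shear_matrix u j) = 1"
proof -
  let ?span = "vec.span {row k (mat 1 :: 'a^'n^'n) | k. k \<noteq> j}"
  have row_id: "row k (mat 1 :: 'a^'n^'n) = axis k 1" for k
    by (simp add: row_def mat_def axis_def vec_eq_iff)
  have transpose_shear: "transpose (shear_matrix u j)
      = (\<chi> k. if k = j then row j (mat 1) + - u else row k (mat 1 :: 'a^'n^'n))"
    using assms by (auto simp: vec_eq_iff transpose_def shear_matrix_def row_id axis_def)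
  have "(\<Sum>k\<in>UNIV. (- u) $ k *s axis k 1) \<in> ?span"
  proof (rule vec.span_sum)
    fix k :: 'n
    show "(- u) $ k *s axis k 1 \<in> ?span"
    proof (cases "k = j")
      case True
      then show ?thesis using assms by (simp add: vec.span_zero)
    next
      case False
      then have "axis k 1 \<in> ?span" by (intro vec.span_base) (auto simp: row_id)
      then show ?thesis by (rule vec.span_scale)
    qed
  qed
  then have "det (transpose (shear_matrix u j)) = det (mat 1 :: 'a^'n^'n)"
    unfolding transpose_shear basis_expansion by (rule det_row_span)
  then show ?thesis by simp
qed

lemma shear_matrix_congruence_nth:
  fixes M :: "'a::comm_ring_1^'n^'n"
  shows "(shear_matrix u j ** M ** transpose (shear_matrix u j)) $ a $ b
    = M $ a $ b - u $ a * M $ j $ b - u $ b * (M $ a $ j - u $ a * M $ j $ j)"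
proof -
  define E where "E = shear_matrix u j"
  have EM: "(E ** M) $ a $ c = M $ a $ c - u $ a * M $ j $ c" for a c
  proof -
    have "(\<Sum>b\<in>UNIV. E $ a $ b * M $ b $ c)
        = (\<Sum>b\<in>UNIV. (if b = a then M $ a $ c else 0) - (if b = j then u $ a * M $ j $ c else 0))"
      by (rule sum.cong) (auto simp: E_def shear_matrix_def left_diff_distrib)
    then show ?thesis by (simp add: matrix_matrix_mult_def sum_subtractf)
  qed
  have "(\<Sum>c\<in>UNIV. (E ** M) $ a $ c * transpose E $ c $ b)
      = (\<Sum>c\<in>UNIV. (if c = b then (E ** M) $ a $ b else 0)
          - (if c = j then u $ b * (E ** M) $ a $ j else 0))"
    by (rule sum.cong) (auto simp: E_def shear_matrix_def transpose_def right_diff_distrib)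
  then show ?thesis
    by (simp add: matrix_matrix_mult_def[of "E ** M"] sum_subtractf EM E_def[symmetric])
qed

text \<open>One step of symmetric Gaussian elimination: the Schur complement of the pivot M j j.\<close>
lemma pos_def_matrix_eliminate:
  fixes M :: "real^'n^'n"
  assumes M: "pos_def_matrix M"
  shows "\<exists>M'. pos_def_matrix M' \<and> det M' = det M \<and> (\<forall>i. M' $ i $ i \<le> M $ i $ i) \<and>
    (\<forall>i. i \<noteq> j \<longrightarrow> M' $ i $ j = 0 \<and> M' $ j $ i = 0) \<and>
    (\<forall>a b. a \<noteq> j \<longrightarrow> b \<noteq> j \<longrightarrow>
      M' $ a $ b = M $ a $ b - M $ a $ j * M $ j $ b / M $ j $ j)"
proof -
  define u :: "real^'n" where "u = (\<chi> a. if a = j then 0 else M $ a $ j / M $ j $ j)"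
  define E where "E = shear_matrix u j"
  have pivot: "0 < M $ j $ j" by (rule pos_def_matrix_diag_pos[OF M])
  have sym: "M $ a $ b = M $ b $ a" for a b by (rule pos_def_matrix_nth_sym[OF M])
  have detE: "det E = 1" unfolding E_def by (rule det_shear_matrix) (simp add: u_def)
  then have "invertible (transpose E)" by (simp add: invertible_det_nz)
  then have pd: "pos_def_matrix (E ** M ** transpose E)"
    using pos_def_matrix_congruence[OF M] by fastforce
  have det: "det (E ** M ** transpose E) = det M" by (simp add: det_mul detE)
  have nth: "(E ** M ** transpose E) $ a $ b
      = M $ a $ b - u $ a * M $ j $ b - u $ b * (M $ a $ j - u $ a * M $ j $ j)" for a b
    unfolding E_def by (rule shear_matrix_congruence_nth)
  have schur: "(E ** M ** transpose E) $ a $ b = M $ a $ b - M $ a $ j * M $ j $ b / M $ j $ j"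
    if "a \<noteq> j" "b \<noteq> j" for a b
    using that nth[of a b] pivot sym[of b j] by (simp add: u_def field_simps)
  show ?thesis
  proof (intro exI[of _ "E ** M ** transpose E"] conjI allI impI)
    fix i
    show "(E ** M ** transpose E) $ i $ i \<le> M $ i $ i"
    proof (cases "i = j")
      case False
      then have "(E ** M ** transpose E) $ i $ i = M $ i $ i - (M $ i $ j)\<^sup>2 / M $ j $ j"
        using schur sym[of j i] by (simp add: power2_eq_square)
      then show ?thesis using pivot by simp
    qed (use nth[of j j] in \<open>simp add: u_def\<close>)
  next
    fix i
    assume "i \<noteq> j"
    then show "(E ** M ** transpose E) $ i $ j = 0" "(E ** M ** transpose E) $ j $ i = 0"
      using nth[of i j] nth[of j i] pivot sym[of i j] by (simp_all add: u_def field_simps)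
  qed (use pd det schur in simp_all)
qed

lemma pos_def_matrix_eliminate_set:
  fixes K :: "real^'n^'n"
  assumes K: "pos_def_matrix K" and "finite S"
  shows "\<exists>M. pos_def_matrix M \<and> det M = det K \<and> (\<forall>i. M $ i $ i \<le> K $ i $ i) \<and>
    (\<forall>a b. a \<noteq> b \<and> (a \<in> S \<or> b \<in> S) \<longrightarrow> M $ a $ b = 0)"
  using \<open>finite S\<close>
proof (induction S rule: finite_induct)
  case empty
  show ?case using K by blast
next
  case (insert j S)
  then obtain M where M: "pos_def_matrix M" "det M = det K" "\<forall>i. M $ i $ i \<le> K $ i $ i"
    and zero: "\<forall>a b. a \<noteq> b \<and> (a \<in> S \<or> b \<in> S) \<longrightarrow> M $ a $ b = 0"
    by blast
  obtain M' where M': "pos_def_matrix M'" "det M' = det M" "\<forall>i. M' $ i $ i \<le> M $ i $ i"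
    and col: "\<forall>i. i \<noteq> j \<longrightarrow> M' $ i $ j = 0 \<and> M' $ j $ i = 0"
    and schur: "\<forall>a b. a \<noteq> j \<longrightarrow> b \<noteq> j \<longrightarrow>
      M' $ a $ b = M $ a $ b - M $ a $ j * M $ j $ b / M $ j $ j"
    using pos_def_matrix_eliminate[OF M(1), of j] by blast
  show ?case
  proof (intro exI[of _ M'] conjI allI impI)
    show "pos_def_matrix M'" "det M' = det K" using M' M(2) by simp_all
    show "M' $ i $ i \<le> K $ i $ i" for i using M'(3) M(3) order_trans by blast
  next
    fix a b
    assume ab: "a \<noteq> b \<and> (a \<in> insert j S \<or> b \<in> insert j S)"
    show "M' $ a $ b = 0"
    proof (cases "a = j \<or> b = j")
      case True
      then show ?thesis using col ab by auto
    next
      case False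
      then have schur_ab: "M' $ a $ b = M $ a $ b - M $ a $ j * M $ j $ b / M $ j $ j"
        using schur by blast
      from ab False have "a \<in> S \<or> b \<in> S" by auto
      then have "M $ a $ b = 0 \<and> (M $ a $ j = 0 \<or> M $ j $ b = 0)"
        using zero ab False by auto
      then show ?thesis using schur_ab by auto
    qed
  qed
qed

lemma pos_def_matrix_det_eq_prod:
  fixes K :: "real^'n^'n"
  assumes "pos_def_matrix K"
  obtains d where "\<And>i. 0 < d i" and "\<And>i. d i \<le> K $ i $ i" and "det K = (\<Prod>i\<in>UNIV. d i)"
proof -
  have "\<exists>M. pos_def_matrix M \<and> det M = det K \<and> (\<forall>i. M $ i $ i \<le> K $ i $ i) \<and>
      (\<forall>a b. a \<noteq> b \<longrightarrow> M $ a $ b = 0)"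
    using pos_def_matrix_eliminate_set[OF assms, of UNIV] by simp
  then obtain M where M: "pos_def_matrix M" "det M = det K" "\<forall>i. M $ i $ i \<le> K $ i $ i"
    and zero: "\<forall>a b. a \<noteq> b \<longrightarrow> M $ a $ b = 0"
    by blast
  have det_M: "det M = (\<Prod>i\<in>UNIV. M $ i $ i)" by (rule det_diagonal) (simp add: zero)
  show ?thesis
  proof (rule that[of "\<lambda>i. M $ i $ i"])
    show "0 < M $ i $ i" for i by (rule pos_def_matrix_diag_pos[OF M(1)])
    show "M $ i $ i \<le> K $ i $ i" for i using M(3) by blast
    show "det K = (\<Prod>i\<in>UNIV. M $ i $ i)" using M(2) det_M by simp
  qed
qed

lemma pos_def_matrix_det_pos:
  fixes K :: "real^'n^'n"
  assumes "pos_def_matrix K"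
  shows "0 < det K"
proof -
  obtain d :: "'n \<Rightarrow> real" where "\<And>i. 0 < d i" and "det K = (\<Prod>i\<in>UNIV. d i)"
    using pos_def_matrix_det_eq_prod[OF assms] by blast
  then show ?thesis by (simp add: prod_pos)
qed

lemma hadamard_inequality:
  fixes K :: "real^'n^'n"
  assumes "pos_def_matrix K"
  shows "det K \<le> (\<Prod>i\<in>UNIV. K $ i $ i)"
proof -
  obtain d where d: "\<And>i. 0 < d i" "\<And>i. d i \<le> K $ i $ i" and det: "det K = (\<Prod>i\<in>UNIV. d i)"
    using pos_def_matrix_det_eq_prod[OF assms] by blast
  have "(\<Prod>i\<in>UNIV. d i) \<le> (\<Prod>i\<in>UNIV. K $ i $ i)"
    by (rule prod_mono) (simp add: d less_imp_le)
  then show ?thesis by (simp add: det)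
qed

section \<open>The scalar problem\<close>

lemma alpha_star_radicand_ge_1:
  fixes l b :: real
  assumes "l \<le> 0" and "0 \<le> b"
  shows "1 \<le> 1 - 4 * l * b"
proof -
  have "4 * l * b = 4 * (l * b)" by simp
  then show ?thesis using mult_nonpos_nonneg[OF assms] by linarith
qed

lemma alpha_star_eq:
  assumes "l \<le> 0" and "0 \<le> b"
  shows "alpha_star l b = 2 * b / (1 + sqrt (1 - 4 * l * b))"
proof (cases "l = 0")
  case False
  define s where "s = sqrt (1 - 4 * l * b)"
  have radicand: "1 \<le> 1 - 4 * l * b" by (rule alpha_star_radicand_ge_1[OF assms])
  then have "1 \<le> s" by (simp add: s_def)
  moreover have "s * s = 1 - 4 * l * b"
    using radicand unfolding s_def by (metis abs_of_nonneg order_trans zero_le_one real_sqrt_mult_self)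
  ultimately show ?thesis
    unfolding alpha_star_def s_def[symmetric] using False by (simp add: field_simps)
qed (simp add: alpha_star_def)

lemma alpha_star_pos:
  assumes "l \<le> 0" and "0 < b"
  shows "0 < alpha_star l b"
proof -
  have "1 \<le> sqrt (1 - 4 * l * b)" using assms alpha_star_radicand_ge_1[of l b] by simp
  then have "0 < 1 + sqrt (1 - 4 * l * b)" by linarith
  then show ?thesis using assms by (simp add: alpha_star_eq)
qed

text \<open>alpha_star l b is the stationary point of a \<mapsto> b / a + ln a - l a.\<close>
lemma alpha_star_stationary:
  assumes "l \<le> 0" and "0 \<le> b"
  shows "alpha_star l b - l * (alpha_star l b)\<^sup>2 = b"
proof (cases "l = 0")
  case False
  define s where "s = sqrt (1 - 4 * l * b)"
  have ss: "s * s = 1 - 4 * l * b"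
    using alpha_star_radicand_ge_1[OF assms] unfolding s_def
    by (metis abs_of_nonneg order_trans zero_le_one real_sqrt_mult_self)
  have "(s - 1) / (- 2 * l) - l * ((s - 1) / (- 2 * l))\<^sup>2 = (1 - s * s) / (4 * l)"
    using False by (simp add: field_simps power2_eq_square)
  also have "\<dots> = b" using False by (simp add: ss)
  finally show ?thesis unfolding alpha_star_def s_def[symmetric] using False by simp
qed (simp add: alpha_star_def)

lemma alpha_star_strict_mono:
  assumes "l1 < l2" and "l2 \<le> 0" and "0 < b"
  shows "alpha_star l1 b < alpha_star l2 b"
proof -
  have "1 \<le> sqrt (1 - 4 * l2 * b)"
    using alpha_star_radicand_ge_1[of l2 b] assms by simp
  moreover have "sqrt (1 - 4 * l2 * b) < sqrt (1 - 4 * l1 * b)" using assms by simp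
  ultimately have "2 * b / (1 + sqrt (1 - 4 * l1 * b)) < 2 * b / (1 + sqrt (1 - 4 * l2 * b))"
    using assms(3) by (intro divide_strict_left_mono mult_pos_pos) linarith+
  then show ?thesis using assms by (simp add: alpha_star_eq)
qed

lemma alpha_star_le:
  assumes "l \<le> 0" and "0 < e" and "0 \<le> b" and "l * e\<^sup>2 \<le> - b"
  shows "alpha_star l b \<le> e"
proof (rule ccontr)
  assume "\<not> alpha_star l b \<le> e"
  then have "e\<^sup>2 \<le> (alpha_star l b)\<^sup>2" using assms(2) by (simp add: power_mono)
  then have "l * (alpha_star l b)\<^sup>2 \<le> l * e\<^sup>2" using assms(1) by (rule mult_left_mono_neg)
  then have "alpha_star l b \<le> 0"
    using alpha_star_stationary[OF assms(1,3)] assms(4) by linarith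
  then show False using \<open>\<not> alpha_star l b \<le> e\<close> assms(2) by linarith
qed

lemma continuous_on_alpha_star:
  assumes "0 \<le> b"
  shows "continuous_on {..0} (\<lambda>l. alpha_star l b)"
proof -
  have nonzero: "1 + sqrt (1 - 4 * l * b) \<noteq> 0" if "l \<le> 0" for l
    using real_sqrt_ge_one[OF alpha_star_radicand_ge_1[OF that assms]] by linarith
  have "continuous_on {..0} (\<lambda>l. 2 * b / (1 + sqrt (1 - 4 * l * b)))"
    by (intro continuous_intros) (use nonzero in auto)
  moreover have "continuous_on {..0} (\<lambda>l. alpha_star l b)
      = continuous_on {..0} (\<lambda>l. 2 * b / (1 + sqrt (1 - 4 * l * b)))"
    using assms by (intro continuous_on_cong) (auto simp: alpha_star_eq)
  ultimately show ?thesis by simp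
qed

lemma lagrange_multiplier_exists_unique:
  fixes b :: "'i \<Rightarrow> real"
  assumes "finite I" and b: "\<And>i. i \<in> I \<Longrightarrow> 0 < b i" and "0 < c" and "c \<le> sum b I"
  shows "\<exists>!l. l \<le> 0 \<and> (\<Sum>i\<in>I. alpha_star l (b i)) = c"
proof -
  define f where "f l = (\<Sum>i\<in>I. alpha_star l (b i))" for l
  have "I \<noteq> {}" using assms by auto
  then have "0 < card I" using \<open>finite I\<close> by (simp add: card_gt_0_iff)
  define e where "e = c / card I"
  have "0 < e" using \<open>0 < c\<close> \<open>0 < card I\<close> by (simp add: e_def)
  define l0 where "l0 = - sum b I / e\<^sup>2"
  have "l0 \<le> 0" using b by (simp add: l0_def sum_nonneg less_imp_le)
  have "f l0 \<le> (\<Sum>i\<in>I. e)"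
    unfolding f_def
  proof (intro sum_mono alpha_star_le)
    fix i assume "i \<in> I"
    then have "b i \<le> sum b I" using assms by (intro member_le_sum) (auto intro: less_imp_le)
    then show "l0 * e\<^sup>2 \<le> - b i" using \<open>0 < e\<close> by (simp add: l0_def)
  qed (use \<open>l0 \<le> 0\<close> \<open>0 < e\<close> b in \<open>auto intro: less_imp_le\<close>)
  also have "\<dots> = c" using \<open>0 < card I\<close> by (simp add: e_def)
  finally have below: "f l0 \<le> c" .
  have above: "c \<le> f 0" using assms(4) by (simp add: f_def alpha_star_def)
  have "continuous_on {l0..0} (\<lambda>l. alpha_star l (b i))" if "i \<in> I" for i
    using b[OF that] by (intro continuous_on_subset[OF continuous_on_alpha_star]) auto
  then have "continuous_on {l0..0} f" unfolding f_def by (rule continuous_on_sum)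
  then obtain l where "l \<le> 0" and "f l = c"
    using IVT'[OF below above \<open>l0 \<le> 0\<close>] by blast
  moreover have "l' = l" if "l' \<le> 0" "f l' = c" for l'
  proof -
    have mono: "f l1 < f l2" if "l1 < l2" "l2 \<le> 0" for l1 l2
      unfolding f_def using \<open>finite I\<close> \<open>I \<noteq> {}\<close> b that
      by (intro sum_strict_mono alpha_star_strict_mono) auto
    show ?thesis
    proof (rule linorder_cases[of l' l])
      assume "l' < l"
      then show ?thesis using mono[of l' l] that \<open>l \<le> 0\<close> \<open>f l = c\<close> by simp
    next
      assume "l < l'"
      then show ?thesis using mono[of l l'] that \<open>f l = c\<close> by simp
    qed
  qed
  ultimately show ?thesis unfolding f_def[symmetric] by blast
qed

lemma stationary_point_minimizes:
  fixes l \<alpha> a b :: real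
  assumes "l \<le> 0" and "0 < \<alpha>" and "\<alpha> - l * \<alpha>\<^sup>2 = b" and "0 < a"
  shows "b / \<alpha> + ln \<alpha> - l * \<alpha> \<le> b / a + ln a - l * a"
proof -
  have "ln \<alpha> - ln a \<le> \<alpha> / a - 1"
    using ln_le_minus_one[of "\<alpha> / a"] assms by (simp add: ln_div)
  moreover have "b / a - b / \<alpha> + 1 - \<alpha> / a - l * a + l * \<alpha> = - l * (a - \<alpha>)\<^sup>2 / a"
    using assms by (simp add: assms(3)[symmetric] field_simps power2_eq_square)
  moreover have "0 \<le> - l * (a - \<alpha>)\<^sup>2 / a"
    using assms by (intro divide_nonneg_pos mult_nonneg_nonneg) auto
  ultimately show ?thesis by linarith
qed

text \<open>Weak duality: with l \<le> 0, relaxing the budget to sum a \<le> sum \<alpha> keeps the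
  Lagrangian bound.\<close>
lemma sum_stationary_points_minimize:
  fixes \<alpha> a b :: "'i \<Rightarrow> real"
  assumes "finite I" and "l \<le> 0"
    and \<alpha>: "\<And>i. i \<in> I \<Longrightarrow> 0 < \<alpha> i \<and> \<alpha> i - l * (\<alpha> i)\<^sup>2 = b i"
    and a: "\<And>i. i \<in> I \<Longrightarrow> 0 < a i" and "sum a I \<le> sum \<alpha> I"
  shows "(\<Sum>i\<in>I. b i / \<alpha> i + ln (\<alpha> i)) \<le> (\<Sum>i\<in>I. b i / a i + ln (a i))"
proof -
  have "(\<Sum>i\<in>I. b i / \<alpha> i + ln (\<alpha> i) - l * \<alpha> i)
      \<le> (\<Sum>i\<in>I. b i / a i + ln (a i) - l * a i)"
    using stationary_point_minimizes[OF \<open>l \<le> 0\<close>] \<alpha> a by (intro sum_mono) blast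
  moreover have "l * sum \<alpha> I \<le> l * sum a I"
    using \<open>sum a I \<le> sum \<alpha> I\<close> \<open>l \<le> 0\<close> by (rule mult_left_mono_neg)
  ultimately show ?thesis by (simp add: sum_subtractf sum_distrib_left)
qed

section \<open>The objective\<close>

lemma obj_orthogonal_conj:
  fixes Q D G :: "real^'n^'n"
  assumes "orthogonal_matrix Q" and "invertible G"
  shows "obj (transpose Q ** D ** Q) G = obj D (Q ** G ** transpose Q)"
proof -
  have QQt: "Y ** Q ** transpose Q = Y" for Y :: "real^'n^'n"
    using assms(1) unfolding orthogonal_matrix_def by (metis matrix_mul_assoc matrix_mul_rid)
  have oQt: "orthogonal_matrix (transpose Q)" using assms(1) by simp
  have invG': "invertible (Q ** G ** transpose Q)"
    using assms by (simp add: invertible_mult orthogonal_matrix_invertible)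
  have G: "G = transpose Q ** (Q ** G ** transpose Q) ** Q"
    using orthogonal_conj_cancel[of "transpose Q" G] assms(1) by simp
  have "matrix_inv G ** (transpose Q ** D ** Q)
      = transpose Q ** (matrix_inv (Q ** G ** transpose Q) ** D) ** Q"
    by (subst G, subst matrix_inv_orthogonal_conj[OF assms(1) invG'])
       (simp add: matrix_mul_assoc QQt)
  then have "trace (matrix_inv G ** (transpose Q ** D ** Q))
      = trace (matrix_inv (Q ** G ** transpose Q) ** D)"
    by (simp add: trace_orthogonal_conj[OF assms(1)])
  moreover have "det G = det (Q ** G ** transpose Q)"
    using det_orthogonal_conj[OF oQt, of G] by simp
  ultimately show ?thesis unfolding obj_def by simp
qed

lemma obj_diag_matrix:
  fixes a b :: "real^'n"
  assumes "\<And>i. 0 < a $ i"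
  shows "obj (diag_matrix b) (diag_matrix a) = (\<Sum>i\<in>UNIV. b $ i / a $ i + ln (a $ i))"
proof -
  have "trace (matrix_inv (diag_matrix a) ** diag_matrix b) = (\<Sum>i\<in>UNIV. b $ i / a $ i)"
    using assms by (simp add: matrix_inv_diag_matrix less_imp_neq[symmetric]
        trace_mult_diag_matrix divide_inverse mult.commute)
  moreover have "ln (det (diag_matrix a)) = (\<Sum>i\<in>UNIV. ln (a $ i))"
    unfolding det_diag_matrix using assms by (intro ln_prod) (auto simp: less_imp_neq[symmetric])
  ultimately show ?thesis by (simp add: obj_def sum.distrib)
qed

lemma obj_diag_matrix_lower_bound:
  fixes G :: "real^'n^'n" and b :: "real^'n"
  assumes G: "pos_def_matrix G"
  obtains a where "\<And>i. 0 < a i" and "\<And>i. a i \<le> G $ i $ i"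
    and "(\<Sum>i\<in>UNIV. b $ i / a i + ln (a i)) \<le> obj (diag_matrix b) G"
proof -
  define H where "H = matrix_inv G"
  have H: "pos_def_matrix H" unfolding H_def by (rule pos_def_matrix_inv[OF G])
  have Hii: "0 < H $ i $ i" for i by (rule pos_def_matrix_diag_pos[OF H])
  have "det G * det H = 1"
    using matrix_inv_right[OF pos_def_matrix_invertible[OF G]] by (metis H_def det_I det_mul)
  then have "det G = 1 / det H"
    using pos_def_matrix_det_pos[OF H] by (simp add: eq_divide_eq)
  then have "ln (det G) = - ln (det H)"
    using pos_def_matrix_det_pos[OF H] by (simp add: ln_div)
  moreover have "ln (det H) \<le> (\<Sum>i\<in>UNIV. ln (H $ i $ i))"
    using hadamard_inequality[OF H] pos_def_matrix_det_pos[OF H] Hii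
    by (simp add: ln_prod[symmetric] less_imp_neq[symmetric])
  ultimately have lnG: "- (\<Sum>i\<in>UNIV. ln (H $ i $ i)) \<le> ln (det G)" by simp
  define a where "a i = 1 / H $ i $ i" for i
  show ?thesis
  proof (rule that[of a])
    show "0 < a i" for i using Hii by (simp add: a_def)
    show "a i \<le> G $ i $ i" for i
      using pos_def_matrix_diag_mult_inv_ge_1[OF G, of i] Hii by (simp add: a_def H_def field_simps)
    have "b $ i / a i + ln (a i) = H $ i $ i * b $ i - ln (H $ i $ i)" for i
      using Hii[of i] by (simp add: a_def ln_div)
    then have "(\<Sum>i\<in>UNIV. b $ i / a i + ln (a i))
        = (\<Sum>i\<in>UNIV. H $ i $ i * b $ i) - (\<Sum>i\<in>UNIV. ln (H $ i $ i))"
      by (simp add: sum_subtractf)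
    also have "\<dots> \<le> obj (diag_matrix b) G"
      using lnG by (simp add: obj_def H_def trace_mult_diag_matrix)
    finally show "(\<Sum>i\<in>UNIV. b $ i / a i + ln (a i)) \<le> obj (diag_matrix b) G" .
  qed
qed

lemma obj_diag_matrix_minimal:
  fixes b :: "real^'n" and G :: "real^'n^'n"
  assumes b: "\<And>i. 0 < b $ i" and "l \<le> 0" and G: "pos_def_matrix G"
    and "(\<Sum>i\<in>UNIV. alpha_star l (b $ i)) = trace G"
  shows "obj (diag_matrix b) (diag_matrix (\<chi> i. alpha_star l (b $ i))) \<le> obj (diag_matrix b) G"
proof -
  obtain a where a: "\<And>i. 0 < a i" "\<And>i. a i \<le> G $ i $ i"
    and bound: "(\<Sum>i\<in>UNIV. b $ i / a i + ln (a i)) \<le> obj (diag_matrix b) G"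
    using obj_diag_matrix_lower_bound[OF G, where b = b] by blast
  have "sum a UNIV \<le> (\<Sum>i\<in>UNIV. alpha_star l (b $ i))"
    using a(2) assms(4) by (simp add: trace_def sum_mono)
  then have "(\<Sum>i\<in>UNIV. b $ i / alpha_star l (b $ i) + ln (alpha_star l (b $ i)))
      \<le> (\<Sum>i\<in>UNIV. b $ i / a i + ln (a i))"
    using \<open>l \<le> 0\<close> b a(1)
    by (intro sum_stationary_points_minimize) (auto simp: alpha_star_pos alpha_star_stationary less_imp_le)
  then show ?thesis
    using bound \<open>l \<le> 0\<close> b by (simp add: obj_diag_matrix alpha_star_pos)
qed

lemma obj_conj_diag_matrix_minimal:
  fixes B Q G :: "real^'n^'n" and \<beta> :: "real^'n"
  assumes Q: "orthogonal_matrix Q" and B: "B = transpose Q ** diag_matrix \<beta> ** Q"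
    and \<beta>: "\<forall>i. 0 < \<beta> $ i" and "l \<le> 0" and G: "pos_def_matrix G"
    and "(\<Sum>i\<in>UNIV. alpha_star l (\<beta> $ i)) = trace G"
  shows "obj B (transpose Q ** diag_matrix (\<chi> i. alpha_star l (\<beta> $ i)) ** Q) \<le> obj B G"
proof -
  let ?A = "diag_matrix (\<chi> i. alpha_star l (\<beta> $ i))"
  have "pos_def_matrix ?A" using \<beta> \<open>l \<le> 0\<close> by (simp add: pos_def_diag_matrix_iff alpha_star_pos)
  then have "obj B (transpose Q ** ?A ** Q) = obj (diag_matrix \<beta>) ?A"
    using Q by (simp add: B obj_orthogonal_conj orthogonal_conj_cancel pos_def_matrix_invertible
        pos_def_matrix_congruence orthogonal_matrix_invertible)
  also have "\<dots> \<le> obj (diag_matrix \<beta>) (Q ** G ** transpose Q)"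
    using \<beta> \<open>l \<le> 0\<close> pos_def_matrix_orthogonal_conj[OF G Q] assms(6)
      trace_orthogonal_conj[of "transpose Q" G] Q
    by (intro obj_diag_matrix_minimal) auto
  also have "\<dots> = obj B G"
    using G Q by (simp add: B obj_orthogonal_conj pos_def_matrix_invertible)
  finally show ?thesis .
qed

theorem lemma9:
  fixes B Q :: "real^'n^'n" and \<beta> :: "real^'n" and c :: real
  assumes "pos_def_matrix B"
    and "orthogonal_matrix Q"
    and "B = transpose Q ** diag_matrix \<beta> ** Q"
    and "\<forall>i. \<beta> $ i \<ge> 0"
    and "0 < c" and "c \<le> trace B"
  shows "(\<exists>!l. l \<le> 0 \<and> (\<Sum>i\<in>UNIV. 2 * \<beta> $ i / (1 + sqrt (1 - 4 * l * \<beta> $ i))) = c) \<and>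
    (\<forall>l. l \<le> 0 \<and> (\<Sum>i\<in>UNIV. 2 * \<beta> $ i / (1 + sqrt (1 - 4 * l * \<beta> $ i))) = c \<longrightarrow>
      (let G\<^sub>0 = transpose Q ** diag_matrix (\<chi> i. alpha_star l (\<beta> $ i)) ** Q in
        pos_def_matrix G\<^sub>0 \<and> trace G\<^sub>0 = c \<and>
        (\<forall>G. pos_def_matrix G \<and> trace G = c \<longrightarrow> obj B G\<^sub>0 \<le> obj B G)))"
proof -
  have \<beta>: "\<forall>i. 0 < \<beta> $ i"
    using pos_def_matrix_orthogonal_conj[OF assms(1,2)] assms(2)
    by (simp add: assms(3) orthogonal_conj_cancel pos_def_diag_matrix_iff)
  have "trace B = (\<Sum>i\<in>UNIV. \<beta> $ i)"
    using assms(2,3) by (simp add: trace_orthogonal_conj trace_diag_matrix)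
  then have multiplier: "\<exists>!l. l \<le> 0 \<and> (\<Sum>i\<in>UNIV. alpha_star l (\<beta> $ i)) = c"
    using \<beta> assms(5,6) by (intro lagrange_multiplier_exists_unique) auto
  have "(l \<le> 0 \<and> (\<Sum>i\<in>UNIV. 2 * \<beta> $ i / (1 + sqrt (1 - 4 * l * \<beta> $ i))) = c)
      \<longleftrightarrow> (l \<le> 0 \<and> (\<Sum>i\<in>UNIV. alpha_star l (\<beta> $ i)) = c)" for l
    using assms(4) by (auto simp: alpha_star_eq)
  moreover have "pos_def_matrix G\<^sub>0 \<and> trace G\<^sub>0 = c \<and>
      (\<forall>G. pos_def_matrix G \<and> trace G = c \<longrightarrow> obj B G\<^sub>0 \<le> obj B G)"
    if l: "l \<le> 0" and sum: "(\<Sum>i\<in>UNIV. alpha_star l (\<beta> $ i)) = c"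
      and G\<^sub>0: "G\<^sub>0 = transpose Q ** diag_matrix (\<chi> i. alpha_star l (\<beta> $ i)) ** Q"
    for l G\<^sub>0
  proof (intro conjI allI impI)
    have "pos_def_matrix (diag_matrix (\<chi> i. alpha_star l (\<beta> $ i)))"
      using \<beta> l by (simp add: pos_def_diag_matrix_iff alpha_star_pos)
    then show "pos_def_matrix G\<^sub>0"
      using G\<^sub>0 assms(2) by (simp add: pos_def_matrix_congruence orthogonal_matrix_invertible)
    show "trace G\<^sub>0 = c" using G\<^sub>0 assms(2) sum by (simp add: trace_orthogonal_conj trace_diag_matrix)
    show "obj B G\<^sub>0 \<le> obj B G" if "pos_def_matrix G \<and> trace G = c" for G
      using obj_conj_diag_matrix_minimal[OF assms(2,3) \<beta> l] that sum G\<^sub>0 by simp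
  qed
  ultimately show ?thesis using multiplier by (simp add: Let_def)
qed

end
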